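(* Let $\mathcal{G}$ be a connected undirected graph on $n>1$ nodes, i.e. a symmetric, strongly connected digraph, with the uniform weights described in the context. If $\epsilon\in\big(0,(1-\tfrac1n)(2-\tfrac1n)\big)$, then the deterministic algorithm with parameter $\epsilon$ achieves average consensus.
   Context: Setting: $\mathcal{G}=(\mathcal{V},\mathcal{E})$ with $\mathcal{V}=\{1,\dots,n\}$ and no selfloops. Symmetric means that $(j,i)\in\mathcal{E}$ implies $(i,j)\in\mathcal{E}$. The degree of $\mathcal{G}$ is $d=\max_i|\{j:(j,i)\in\mathcal{E}\}|$. Weights: $a_{ij}=1/(2dn)$ if $(j,i)\in\mathcal{E}$ and $0$ otherwise. Also $b_{ih}=1/(dn)$ if $(i,h)\in\mathcal{E}$ and $0$ otherwise. Matrices: $L=D-A$, where $A=[a_{ij}]$ and $D=\mathrm{diag}(\sum_j a_{ij})$. $S=(I-\tilde D)+B$, where $B=[b_{ih}]^T$ and $\tilde D=\mathrm{diag}(\sum_h b_{ih})$. Also $M=\begin{bmatrix} I-L & \epsilon I\\ L & S-\epsilon I\end{bmatrix}$. Deterministic algorithm: $(x(k+1),s(k+1))^T=M(x(k),s(k))^T$ with $s(0)=0$. Average consensus: for every $x(0)\in\mathbb{R}^n$, $(x(k),s(k))\to(x_a\mathbf{1},0)$ where $x_a=\mathbf{1}^Tx(0)/n$. *)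

theory Defs
  imports "HOL-Analysis.Analysis"
begin

(* Graph on the finite vertex type 'n (n = CARD('n)); E j i means (j,i) is an edge. *)

definition no_selfloops :: "('n \<Rightarrow> 'n \<Rightarrow> bool) \<Rightarrow> bool" where
  "no_selfloops E \<longleftrightarrow> (\<forall>i. \<not> E i i)"

definition symmetric_graph :: "('n \<Rightarrow> 'n \<Rightarrow> bool) \<Rightarrow> bool" where
  "symmetric_graph E \<longleftrightarrow> (\<forall>i j. E j i \<longrightarrow> E i j)"

definition strongly_connected :: "('n \<Rightarrow> 'n \<Rightarrow> bool) \<Rightarrow> bool" where
  "strongly_connected E \<longleftrightarrow> (\<forall>i j. E\<^sup>*\<^sup>* i j)"

definition degree :: "('n::finite \<Rightarrow> 'n \<Rightarrow> bool) \<Rightarrow> nat" where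
  "degree E = Max (range (\<lambda>i. card {j. E j i}))"

definition Amat :: "('n::finite \<Rightarrow> 'n \<Rightarrow> bool) \<Rightarrow> real^'n^'n" where
  "Amat E = (\<chi> i j. if E j i then 1 / (2 * real (degree E) * real CARD('n)) else 0)"

definition Dmat :: "('n::finite \<Rightarrow> 'n \<Rightarrow> bool) \<Rightarrow> real^'n^'n" where
  "Dmat E = (\<chi> i j. if i = j then (\<Sum>k\<in>UNIV. Amat E $ i $ k) else 0)"

definition Lmat :: "('n::finite \<Rightarrow> 'n \<Rightarrow> bool) \<Rightarrow> real^'n^'n" where
  "Lmat E = Dmat E - Amat E"

definition bw :: "('n::finite \<Rightarrow> 'n \<Rightarrow> bool) \<Rightarrow> 'n \<Rightarrow> 'n \<Rightarrow> real" where
  "bw E i h = (if E i h then 1 / (real (degree E) * real CARD('n)) else 0)"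

definition Bmat :: "('n::finite \<Rightarrow> 'n \<Rightarrow> bool) \<Rightarrow> real^'n^'n" where
  "Bmat E = transpose (\<chi> i h. bw E i h)"

definition Dtmat :: "('n::finite \<Rightarrow> 'n \<Rightarrow> bool) \<Rightarrow> real^'n^'n" where
  "Dtmat E = (\<chi> i j. if i = j then (\<Sum>h\<in>UNIV. bw E i h) else 0)"

definition Smat :: "('n::finite \<Rightarrow> 'n \<Rightarrow> bool) \<Rightarrow> real^'n^'n" where
  "Smat E = (mat 1 - Dtmat E) + Bmat E"

definition Mstep :: "('n::finite \<Rightarrow> 'n \<Rightarrow> bool) \<Rightarrow> real \<Rightarrow> (real^'n) \<times> (real^'n) \<Rightarrow> (real^'n) \<times> (real^'n)" where
  "Mstep E eps xs =
     ((mat 1 - Lmat E) *v fst xs + (eps *\<^sub>R mat 1) *v snd xs,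
      Lmat E *v fst xs + (Smat E - eps *\<^sub>R mat 1) *v snd xs)"

definition traj :: "('n::finite \<Rightarrow> 'n \<Rightarrow> bool) \<Rightarrow> real \<Rightarrow> real^'n \<Rightarrow> nat \<Rightarrow> (real^'n) \<times> (real^'n)" where
  "traj E eps x0 k = (Mstep E eps ^^ k) (x0, 0)"

definition average_consensus :: "('n::finite \<Rightarrow> 'n \<Rightarrow> bool) \<Rightarrow> real \<Rightarrow> bool" where
  "average_consensus E eps \<longleftrightarrow>
     (\<forall>x0 :: real^'n. traj E eps x0 \<longlonglongrightarrow>
        (((\<Sum>i\<in>UNIV. x0 $ i) / real CARD('n)) *\<^sub>R vec 1, 0))"

end

theory Submission
  imports Defs "Jordan_Normal_Form.Spectral_Radius"
begin

text \<open>
  For a symmetric graph \<open>S = I - 2L\<close>, and the iteration matrix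
  \<open>M = [[I - L, \<epsilon>I], [L, (1 - \<epsilon>)I - 2L]]\<close> has column sums 1 and fixes \<open>(\<one>, 0)\<close>.
  Hence \<open>(x(k) - x\<^sub>a\<one>, s(k))\<close> evolves under the deflated matrix \<open>M - (\<one>, 0)\<one>\<^sup>T/n\<close>, whose powers
  tend to zero once every eigenvalue \<open>\<mu>\<close> of \<open>M\<close> with a zero-sum eigenvector \<open>(y, s)\<close> satisfies
  \<open>|\<mu>| < 1\<close>. If \<open>\<Sum>s \<noteq> 0\<close> then \<open>\<mu> = 1 - \<epsilon>\<close>. Otherwise \<open>\<Sum>y = 0\<close>, and eliminating \<open>s\<close>
  shows that a quadratic polynomial in \<open>L\<close> annihilates \<open>y\<close>; so some eigenvalue \<open>\<rho>\<close> of \<open>L\<close>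
  with a zero-sum eigenvector satisfies \<open>\<mu>\<^sup>2 - (2 - 3\<rho> - \<epsilon>)\<mu> + (1 - 3\<rho> + 2\<rho>\<^sup>2 - \<epsilon>) = 0\<close>.
  The Rayleigh quotient places \<open>\<rho>\<close> in \<open>(0, 1/n]\<close> (positivity by connectivity), and for such \<open>\<rho>\<close>
  the bound on \<open>\<epsilon>\<close> gives the Schur--Cohn conditions for this quadratic.
\<close>

no_notation Matrix.vec_index (infixl \<open>$\<close> 100)

section \<open>Geometric decay of matrix powers\<close>

lemma pow_smult_mat:
  assumes "A \<in> carrier_mat n n"
  shows "(c \<cdot>\<^sub>m A) ^\<^sub>m k = (c ^ k :: 'a::comm_ring_1) \<cdot>\<^sub>m A ^\<^sub>m k"
  by (induction k) (use assms in \<open>auto simp: mult_smult_distrib mult_smult_assoc_mat\<close>)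

lemma eigenvalue_smult_mat:
  assumes "A \<in> carrier_mat n n" and "eigenvalue A \<mu>"
  shows "eigenvalue (c \<cdot>\<^sub>m A) (c * \<mu> :: 'a::comm_ring_1)"
proof -
  obtain v where v: "eigenvector A v \<mu>"
    using assms(2) unfolding eigenvalue_def by blast
  have "(c \<cdot>\<^sub>m A) *\<^sub>v v = (c * \<mu>) \<cdot>\<^sub>v v"
  proof (rule eq_vecI)
    fix i assume "i < dim_vec ((c * \<mu>) \<cdot>\<^sub>v v)"
    have v_dim: "v \<in> carrier_vec n" using v assms(1) unfolding eigenvector_def by auto
    then have i: "i < n" using \<open>i < dim_vec ((c * \<mu>) \<cdot>\<^sub>v v)\<close> by simp
    have "vec_index ((c \<cdot>\<^sub>m A) *\<^sub>v v) i = c * vec_index (A *\<^sub>v v) i"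
      using i v_dim assms(1)
      by (auto simp: scalar_prod_def sum_distrib_left mult.assoc intro!: sum.cong)
    also have "vec_index (A *\<^sub>v v) i = \<mu> * vec_index v i"
      using v i v_dim unfolding eigenvector_def by auto
    finally show "vec_index ((c \<cdot>\<^sub>m A) *\<^sub>v v) i = vec_index ((c * \<mu>) \<cdot>\<^sub>v v) i"
      using i v_dim by (simp add: mult.assoc)
  qed (use v in \<open>auto simp: eigenvector_def\<close>)
  then show ?thesis using v unfolding eigenvalue_def eigenvector_def by auto
qed

lemma pow_mat_norm_bound_geometric:
  fixes A :: "complex mat"
  assumes A: "A \<in> carrier_mat n n" and ev: "\<And>\<mu>. eigenvalue A \<mu> \<Longrightarrow> cmod \<mu> < 1"
  shows "\<exists>c r. 0 \<le> r \<and> r < 1 \<and> (\<forall>k. norm_bound (A ^\<^sub>m k) (c * r ^ k))"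
proof (cases "n = 0")
  case True
  then show ?thesis using A by (intro exI[of _ 0]) (auto simp: norm_bound_def)
next
  case False
  define \<rho> where "\<rho> = spectral_radius A"
  have "\<rho> \<in> norm ` spectrum A" unfolding \<rho>_def using A False by (intro spectral_radius_mem_max) auto
  then have \<rho>: "0 \<le> \<rho>" "\<rho> < 1" using ev unfolding spectrum_def by auto
  define r where "r = (1 + \<rho>) / 2"
  have r: "0 < r" "r < 1" "\<rho> < r" using \<rho> by (auto simp: r_def)
  \<comment> \<open>the powers of \<open>A / r\<close> stay bounded because \<open>A / r\<close> has spectral radius below 1\<close>
  define B where "B = (1 / of_real r) \<cdot>\<^sub>m A"
  have B: "B \<in> carrier_mat n n" using A by (simp add: B_def)
  have A_eq: "A = of_real r \<cdot>\<^sub>m B" using r A by (auto simp: B_def)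
  have "cmod \<nu> < 1" if "eigenvalue B \<nu>" for \<nu>
  proof -
    have "eigenvalue A (of_real r * \<nu>)"
      unfolding A_eq using B that by (rule eigenvalue_smult_mat)
    then have "cmod (of_real r * \<nu>) \<le> \<rho>"
      unfolding \<rho>_def using False by (intro spectral_radius_mem_max(2)[OF A]) (auto simp: spectrum_def)
    then have "r * cmod \<nu> \<le> \<rho>" using r by (simp add: norm_mult)
    then show ?thesis using r by (smt (verit) mult_le_cancel_left1 norm_ge_zero)
  qed
  moreover have "spectral_radius B \<in> norm ` spectrum B" using B False by (intro spectral_radius_mem_max) auto
  ultimately have "spectral_radius B < 1" unfolding spectrum_def by auto
  then obtain c where c: "\<And>k. norm_bound (B ^\<^sub>m k) c"
    using spectral_radius_jnf_norm_bound_less_1_upper_triangular[OF B] by blast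
  have "norm_bound (A ^\<^sub>m k) (c * r ^ k)" for k
  proof
    fix i j assume "i < dim_row (A ^\<^sub>m k)" "j < dim_col (A ^\<^sub>m k)"
    then have ij: "i < dim_row (B ^\<^sub>m k)" "j < dim_col (B ^\<^sub>m k)" using A B by auto
    have "cmod ((A ^\<^sub>m k) $$ (i, j)) = r ^ k * cmod ((B ^\<^sub>m k) $$ (i, j))"
      unfolding A_eq pow_smult_mat[OF B] using ij r by (simp add: norm_mult norm_power)
    also have "\<dots> \<le> r ^ k * c" using c[of k] ij r unfolding norm_bound_def by (simp add: mult_left_mono)
    finally show "cmod ((A ^\<^sub>m k) $$ (i, j)) \<le> c * r ^ k" by (simp add: mult.commute)
  qed
  then show ?thesis using r by (intro exI[of _ c] exI[of _ r]) auto
qed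

section \<open>Matrices as functions on a finite index type\<close>

definition mat_apply :: "('k::finite \<Rightarrow> 'k \<Rightarrow> 'a::comm_ring_1) \<Rightarrow> ('k \<Rightarrow> 'a) \<Rightarrow> 'k \<Rightarrow> 'a" where
  "mat_apply A w = (\<lambda>k. \<Sum>l\<in>UNIV. A k l * w l)"

lemma mat_apply_add: "mat_apply A (\<lambda>k. f k + g k) = (\<lambda>k. mat_apply A f k + mat_apply A g k)"
  by (simp add: mat_apply_def distrib_left sum.distrib)

lemma mat_apply_diff: "mat_apply A (\<lambda>k. f k - g k) = (\<lambda>k. mat_apply A f k - mat_apply A g k)"
  by (simp add: mat_apply_def right_diff_distrib sum_subtractf)

lemma mat_apply_scale: "mat_apply A (\<lambda>k. c * f k) = (\<lambda>k. c * mat_apply A f k)"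
  by (simp add: mat_apply_def sum_distrib_left mult.left_commute)

lemma mat_apply_mat_diff:
  "mat_apply (\<lambda>i j. P i j - Q i j) w = (\<lambda>i. mat_apply P w i - mat_apply Q w i)"
  by (simp add: fun_eq_iff mat_apply_def left_diff_distrib sum_subtractf)

lemma mat_apply_mat_scale:
  "mat_apply (\<lambda>i j. c * A i j) w = (\<lambda>i. c * mat_apply A w i)"
  by (simp add: fun_eq_iff mat_apply_def sum_distrib_left mult.assoc)

lemma mat_apply_of_real_diag:
  fixes w :: "'k::finite \<Rightarrow> 'a::{comm_ring_1, real_algebra_1}"
  shows "mat_apply (\<lambda>i j. of_real (if i = j then c else 0)) w = (\<lambda>i. of_real c * w i)"
proof
  fix i
  have "mat_apply (\<lambda>i j. of_real (if i = j then c else 0)) w i = (\<Sum>j\<in>UNIV. if i = j then of_real c * w j else 0)"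
    unfolding mat_apply_def by (intro sum.cong) auto
  then show "mat_apply (\<lambda>i j. of_real (if i = j then c else 0)) w i = of_real c * w i" by simp
qed

lemma mat_apply_vec_nth: "mat_apply (\<lambda>i j. M $ i $ j) (vec_nth v) = vec_nth (M *v v)"
  by (simp add: fun_eq_iff mat_apply_def matrix_vector_mult_def)

lemma sum_mat_apply: "(\<Sum>k\<in>UNIV. mat_apply A w k) = (\<Sum>l\<in>UNIV. (\<Sum>k\<in>UNIV. A k l) * w l)"
  unfolding mat_apply_def by (subst sum.swap) (simp add: sum_distrib_right)

definition complex_eigenvalue :: "('k::finite \<Rightarrow> 'k \<Rightarrow> real) \<Rightarrow> complex \<Rightarrow> bool" where
  "complex_eigenvalue A \<mu> \<longleftrightarrow>
     (\<exists>z. z \<noteq> (\<lambda>_. 0) \<and> mat_apply (\<lambda>k l. of_real (A k l)) z = (\<lambda>k. \<mu> * z k))"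

(* An enumeration g of the index type transports these matrices to Jordan_Normal_Form. *)
definition jnf_mat :: "(nat \<Rightarrow> 'k) \<Rightarrow> ('k::finite \<Rightarrow> 'k \<Rightarrow> real) \<Rightarrow> complex mat" where
  "jnf_mat g A = Matrix.mat CARD('k) CARD('k) (\<lambda>(i, j). of_real (A (g i) (g j)))"

definition jnf_vec :: "(nat \<Rightarrow> 'k) \<Rightarrow> ('k::finite \<Rightarrow> real) \<Rightarrow> complex Matrix.vec" where
  "jnf_vec g w = Matrix.vec CARD('k) (\<lambda>i. of_real (w (g i)))"

lemma jnf_mat_carrier:
  fixes A :: "'k::finite \<Rightarrow> 'k \<Rightarrow> real"
  shows "jnf_mat g A \<in> carrier_mat CARD('k) CARD('k)"
  by (simp add: jnf_mat_def)

lemma jnf_vec_mat_apply: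
  assumes g: "bij_betw g {0..<CARD('k)} (UNIV :: 'k::finite set)"
  shows "jnf_vec g (mat_apply A w) = jnf_mat g A *\<^sub>v jnf_vec g w"
proof (rule eq_vecI)
  fix i assume "i < dim_vec (jnf_mat g A *\<^sub>v jnf_vec g w)"
  then have i: "i < CARD('k)" by (simp add: jnf_mat_def)
  have "vec_index (jnf_mat g A *\<^sub>v jnf_vec g w) i
      = (\<Sum>j\<in>{0..<CARD('k)}. of_real (A (g i) (g j) * w (g j)))"
    using i by (simp add: jnf_mat_def jnf_vec_def scalar_prod_def)
  also have "\<dots> = (\<Sum>l\<in>UNIV. of_real (A (g i) l * w l))"
    by (rule sum.reindex_bij_betw[OF g])
  finally show "vec_index (jnf_vec g (mat_apply A w)) i = vec_index (jnf_mat g A *\<^sub>v jnf_vec g w) i"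
    using i by (simp add: jnf_vec_def mat_apply_def)
qed (simp add: jnf_mat_def jnf_vec_def)

lemma jnf_vec_mat_apply_power:
  assumes g: "bij_betw g {0..<CARD('k)} (UNIV :: 'k::finite set)"
  shows "jnf_vec g ((mat_apply A ^^ t) w) = jnf_mat g A ^\<^sub>m t *\<^sub>v jnf_vec g w"
proof (induction t arbitrary: w)
  case 0
  show ?case by (simp add: jnf_mat_def jnf_vec_def)
next
  case (Suc t)
  have "jnf_vec g ((mat_apply A ^^ Suc t) w) = jnf_mat g A ^\<^sub>m t *\<^sub>v (jnf_mat g A *\<^sub>v jnf_vec g w)"
    using jnf_vec_mat_apply[OF g] Suc by (simp add: funpow_Suc_right del: funpow.simps)
  also have "\<dots> = (jnf_mat g A ^\<^sub>m t * jnf_mat g A) *\<^sub>v jnf_vec g w"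
    using jnf_mat_carrier[of g A]
    by (intro assoc_mult_mat_vec[symmetric]) (auto simp: jnf_vec_def)
  finally show ?case by simp
qed

lemma complex_eigenvalue_of_jnf:
  assumes g: "bij_betw g {0..<CARD('k)} (UNIV :: 'k::finite set)"
    and ev: "eigenvalue (jnf_mat g A) \<mu>"
  shows "complex_eigenvalue A \<mu>"
proof -
  obtain v where v: "v \<in> carrier_vec CARD('k)" "v \<noteq> 0\<^sub>v CARD('k)" "jnf_mat g A *\<^sub>v v = \<mu> \<cdot>\<^sub>v v"
    using ev unfolding eigenvalue_def eigenvector_def by (auto simp: jnf_mat_def)
  define z where "z k = vec_index v (inv_into {0..<CARD('k)} g k)" for k
  have z_g: "z (g i) = vec_index v i" if "i < CARD('k)" for i
    using g that by (simp add: z_def bij_betw_inv_into_left)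
  have "z \<noteq> (\<lambda>_. 0)"
  proof
    assume "z = (\<lambda>_. 0)"
    then have "v = 0\<^sub>v CARD('k)" using v(1) z_g by (intro eq_vecI) (auto simp: fun_eq_iff)
    with v(2) show False ..
  qed
  moreover have "mat_apply (\<lambda>k l. of_real (A k l)) z k = \<mu> * z k" for k
  proof -
    obtain i where i: "i < CARD('k)" "g i = k"
      using g by (metis UNIV_I atLeastLessThan_iff bij_betw_iff_bijections)
    have "mat_apply (\<lambda>k l. of_real (A k l)) z k = (\<Sum>j\<in>{0..<CARD('k)}. of_real (A (g i) (g j)) * z (g j))"
      unfolding mat_apply_def i(2)[symmetric] by (rule sum.reindex_bij_betw[OF g, symmetric])
    also have "\<dots> = vec_index (jnf_mat g A *\<^sub>v v) i"
      using i v(1) z_g by (auto simp: jnf_mat_def scalar_prod_def intro!: sum.cong)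
    also have "\<dots> = \<mu> * z k" using v i z_g by auto
    finally show ?thesis .
  qed
  ultimately show ?thesis unfolding complex_eigenvalue_def by (auto simp: fun_eq_iff)
qed

lemma mat_apply_power_geometric_bound:
  fixes A :: "'k::finite \<Rightarrow> 'k \<Rightarrow> real"
  assumes ev: "\<And>\<mu>. complex_eigenvalue A \<mu> \<Longrightarrow> cmod \<mu> < 1"
  shows "\<exists>C r. 0 \<le> r \<and> r < 1 \<and> (\<forall>t. \<bar>(mat_apply A ^^ t) w k\<bar> \<le> C * r ^ t)"
proof -
  obtain g where g: "bij_betw g {0..<CARD('k)} (UNIV :: 'k set)"
    using ex_bij_betw_nat_finite[of "UNIV :: 'k set"] by auto
  have "cmod \<mu> < 1" if "eigenvalue (jnf_mat g A) \<mu>" for \<mu>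
    using ev complex_eigenvalue_of_jnf[OF g that] by blast
  then obtain c r where r: "0 \<le> r" "r < 1" and c: "\<And>t. norm_bound (jnf_mat g A ^\<^sub>m t) (c * r ^ t)"
    using pow_mat_norm_bound_geometric[OF jnf_mat_carrier] by metis
  obtain i where i: "i < CARD('k)" "g i = k"
    using g by (metis UNIV_I atLeastLessThan_iff bij_betw_iff_bijections)
  have pow_carrier: "jnf_mat g A ^\<^sub>m t \<in> carrier_mat CARD('k) CARD('k)" for t
    using jnf_mat_carrier by (rule pow_carrier_mat)
  define C where "C = c * (\<Sum>j<CARD('k). \<bar>w (g j)\<bar>)"
  have "\<bar>(mat_apply A ^^ t) w k\<bar> \<le> C * r ^ t" for t
  proof -
    have "complex_of_real ((mat_apply A ^^ t) w k) = vec_index (jnf_vec g ((mat_apply A ^^ t) w)) i"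
      using i by (simp add: jnf_vec_def)
    also have "\<dots> = (\<Sum>j<CARD('k). (jnf_mat g A ^\<^sub>m t) $$ (i, j) * of_real (w (g j)))"
      unfolding jnf_vec_mat_apply_power[OF g] using i carrier_matD[OF pow_carrier[of t]]
      by (auto simp: jnf_vec_def scalar_prod_def atLeast0LessThan)
    finally have "\<bar>(mat_apply A ^^ t) w k\<bar>
        = norm (\<Sum>j<CARD('k). (jnf_mat g A ^\<^sub>m t) $$ (i, j) * of_real (w (g j)))"
      by (metis norm_of_real)
    also have "\<dots> \<le> (\<Sum>j<CARD('k). c * r ^ t * \<bar>w (g j)\<bar>)"
    proof (rule sum_norm_le)
      fix j assume "j \<in> {..<CARD('k)}"
      then have "cmod ((jnf_mat g A ^\<^sub>m t) $$ (i, j)) \<le> c * r ^ t"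
        using c[of t] i carrier_matD[OF pow_carrier[of t]] by (simp add: norm_bound_def)
      then show "cmod ((jnf_mat g A ^\<^sub>m t) $$ (i, j) * of_real (w (g j))) \<le> c * r ^ t * \<bar>w (g j)\<bar>"
        by (simp add: norm_mult mult_right_mono)
    qed
    also have "\<dots> = C * r ^ t"
      by (simp add: C_def sum_distrib_left mult_ac)
    finally show ?thesis .
  qed
  then show ?thesis using r by blast
qed

lemma mat_apply_power_tendsto_zero:
  fixes A :: "'k::finite \<Rightarrow> 'k \<Rightarrow> real"
  assumes "\<And>\<mu>. complex_eigenvalue A \<mu> \<Longrightarrow> cmod \<mu> < 1"
  shows "(\<lambda>t. (mat_apply A ^^ t) w k) \<longlonglongrightarrow> 0"
proof -
  obtain C r where r: "0 \<le> r" "r < 1" and bound: "\<And>t. \<bar>(mat_apply A ^^ t) w k\<bar> \<le> C * r ^ t"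
    using mat_apply_power_geometric_bound[OF assms] by blast
  have "\<forall>\<^sub>F t in sequentially. norm ((mat_apply A ^^ t) w k) \<le> C * r ^ t"
    using bound by (simp add: always_eventually)
  moreover have "(\<lambda>t. C * r ^ t) \<longlonglongrightarrow> 0"
    using r by (intro tendsto_mult_right_zero LIMSEQ_power_zero) auto
  ultimately show ?thesis by (rule Lim_null_comparison)
qed

definition column_sums_one :: "('k::finite \<Rightarrow> 'k \<Rightarrow> real) \<Rightarrow> bool" where
  "column_sums_one A \<longleftrightarrow> (\<forall>l. (\<Sum>k\<in>UNIV. A k l) = 1)"

lemma column_sums_oneI:
  assumes "\<And>w. (\<Sum>k\<in>UNIV. mat_apply A w k) = (\<Sum>k\<in>UNIV. w k)"
  shows "column_sums_one A"
  unfolding column_sums_one_def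
proof
  fix l
  have "mat_apply A (\<lambda>m. if m = l then 1 else 0) k = A k l" for k
    by (simp add: mat_apply_def if_distrib[of "\<lambda>x. _ * x"] cong: if_cong)
  then show "(\<Sum>k\<in>UNIV. A k l) = 1"
    using assms[of "\<lambda>m. if m = l then 1 else 0"] by simp
qed

lemma sum_mat_apply_of_real:
  fixes w :: "'k::finite \<Rightarrow> 'a::{comm_ring_1, real_algebra_1}"
  assumes "column_sums_one A"
  shows "(\<Sum>k\<in>UNIV. mat_apply (\<lambda>k l. of_real (A k l)) w k) = (\<Sum>k\<in>UNIV. w k)"
  using assms unfolding sum_mat_apply column_sums_one_def by (simp flip: of_real_sum)

lemma sum_mat_apply_power:
  assumes "column_sums_one A"
  shows "(\<Sum>k\<in>UNIV. (mat_apply A ^^ t) x k) = (\<Sum>k\<in>UNIV. x k)"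
proof (induction t)
  case (Suc t)
  then show ?case using sum_mat_apply_of_real[OF assms, of "(mat_apply A ^^ t) x"] by simp
qed simp

definition deflate :: "('k::finite \<Rightarrow> 'k \<Rightarrow> real) \<Rightarrow> ('k \<Rightarrow> real) \<Rightarrow> 'k \<Rightarrow> 'k \<Rightarrow> real" where
  "deflate A v = (\<lambda>k l. A k l - v k)"

lemma mat_apply_deflate:
  fixes w :: "'k::finite \<Rightarrow> 'a::{comm_ring_1, real_algebra_1}"
  shows "mat_apply (\<lambda>k l. of_real (deflate A v k l)) w
    = (\<lambda>k. mat_apply (\<lambda>k l. of_real (A k l)) w k - of_real (v k) * (\<Sum>l\<in>UNIV. w l))"
  by (simp add: mat_apply_def deflate_def left_diff_distrib sum_subtractf sum_distrib_left)

lemma complex_eigenvalue_deflateD: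
  assumes A: "column_sums_one A" and v: "(\<Sum>k\<in>UNIV. v k) = 1"
    and ev: "complex_eigenvalue (deflate A v) \<mu>" and "\<mu> \<noteq> 0"
  shows "\<exists>z. z \<noteq> (\<lambda>_. 0) \<and> (\<Sum>k\<in>UNIV. z k) = 0
    \<and> mat_apply (\<lambda>k l. of_real (A k l)) z = (\<lambda>k. \<mu> * z k)"
proof -
  obtain z where z: "z \<noteq> (\<lambda>_. 0)" and Dz: "mat_apply (\<lambda>k l. of_real (deflate A v k l)) z = (\<lambda>k. \<mu> * z k)"
    using ev unfolding complex_eigenvalue_def by blast
  have "\<mu> * (\<Sum>k\<in>UNIV. z k) = (\<Sum>k\<in>UNIV. mat_apply (\<lambda>k l. of_real (deflate A v k l)) z k)"
    unfolding Dz by (simp add: sum_distrib_left)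
  also have "\<dots> = (\<Sum>k\<in>UNIV. z k) - of_real (\<Sum>k\<in>UNIV. v k) * (\<Sum>k\<in>UNIV. z k)"
    unfolding mat_apply_deflate sum_subtractf sum_mat_apply_of_real[OF A]
    by (simp add: sum_distrib_right)
  finally have sum_z: "(\<Sum>k\<in>UNIV. z k) = 0" using v \<open>\<mu> \<noteq> 0\<close> by simp
  then have "mat_apply (\<lambda>k l. of_real (A k l)) z = mat_apply (\<lambda>k l. of_real (deflate A v k l)) z"
    by (simp add: mat_apply_deflate)
  then show ?thesis using z Dz sum_z by metis
qed

lemma mat_apply_power_tendsto_consensus:
  fixes A :: "'k::finite \<Rightarrow> 'k \<Rightarrow> real"
  assumes A: "column_sums_one A" and Av: "mat_apply A v = v" and v: "(\<Sum>k\<in>UNIV. v k) = 1"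
    and ev: "\<And>\<mu> z. z \<noteq> (\<lambda>_. 0) \<Longrightarrow> (\<Sum>k\<in>UNIV. z k) = 0
      \<Longrightarrow> mat_apply (\<lambda>k l. of_real (A k l)) z = (\<lambda>k. \<mu> * z k) \<Longrightarrow> cmod \<mu> < 1"
  shows "(\<lambda>t. (mat_apply A ^^ t) x k) \<longlonglongrightarrow> (\<Sum>l\<in>UNIV. x l) * v k"
proof -
  define a where "a = (\<Sum>l\<in>UNIV. x l)"
  define W where "W t = (\<lambda>k. (mat_apply A ^^ t) x k - a * v k)" for t
  have sum_W: "(\<Sum>k\<in>UNIV. W t k) = 0" for t
    using v by (simp add: W_def sum_subtractf sum_mat_apply_power[OF A] a_def flip: sum_distrib_left)
  have W_step: "W (Suc t) = mat_apply (deflate A v) (W t)" for t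
  proof -
    have "W (Suc t) = mat_apply A (W t)"
      unfolding W_def mat_apply_diff mat_apply_scale Av by simp
    also have "\<dots> = mat_apply (deflate A v) (W t)"
      using mat_apply_deflate[of A v "W t"] sum_W[of t] by simp
    finally show ?thesis .
  qed
  have W_power: "W t = (mat_apply (deflate A v) ^^ t) (W 0)" for t
    by (induction t) (simp_all add: W_step)
  have "cmod \<mu> < 1" if deflate_ev: "complex_eigenvalue (deflate A v) \<mu>" for \<mu>
  proof (cases "\<mu> = 0")
    case False
    then obtain z where "z \<noteq> (\<lambda>_. 0)" "(\<Sum>k\<in>UNIV. z k) = 0"
      "mat_apply (\<lambda>k l. of_real (A k l)) z = (\<lambda>k. \<mu> * z k)"
      using complex_eigenvalue_deflateD[OF A v deflate_ev] by blast
    then show ?thesis by (rule ev)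
  qed simp
  then have "(\<lambda>t. (mat_apply (deflate A v) ^^ t) (W 0) k) \<longlonglongrightarrow> 0"
    by (rule mat_apply_power_tendsto_zero)
  then have "(\<lambda>t. W t k) \<longlonglongrightarrow> 0"
    unfolding W_power[symmetric] .
  then have "(\<lambda>t. W t k + a * v k) \<longlonglongrightarrow> 0 + a * v k"
    by (intro tendsto_add tendsto_const)
  then show ?thesis by (simp add: W_def a_def)
qed

lemma sum_UNIV_Plus:
  "(\<Sum>k\<in>UNIV. f k) = (\<Sum>i\<in>UNIV. f (Inl i)) + (\<Sum>i\<in>(UNIV :: 'b::finite set). f (Inr i :: 'a::finite + 'b))"
  using sum.Plus[of "UNIV :: 'a set" "UNIV :: 'b set" f] by (simp add: comp_def)

definition block_mat ::
  "('n \<Rightarrow> 'n \<Rightarrow> 'a) \<Rightarrow> ('n \<Rightarrow> 'n \<Rightarrow> 'a) \<Rightarrow> ('n \<Rightarrow> 'n \<Rightarrow> 'a) \<Rightarrow> ('n \<Rightarrow> 'n \<Rightarrow> 'a) \<Rightarrow> 'n + 'n \<Rightarrow> 'n + 'n \<Rightarrow> 'a"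
  where "block_mat P Q R S k l = (case k of Inl i \<Rightarrow> case_sum (P i) (Q i) l | Inr i \<Rightarrow> case_sum (R i) (S i) l)"

lemma mat_apply_block_mat:
  fixes z :: "'n::finite + 'n \<Rightarrow> 'a::comm_ring_1"
  shows "mat_apply (block_mat P Q R S) z = case_sum
    (\<lambda>i. mat_apply P (z \<circ> Inl) i + mat_apply Q (z \<circ> Inr) i)
    (\<lambda>i. mat_apply R (z \<circ> Inl) i + mat_apply S (z \<circ> Inr) i)"
  by (auto simp: fun_eq_iff mat_apply_def block_mat_def sum_UNIV_Plus split: sum.split)

section \<open>Quadratic polynomials\<close>

lemma quadratic_annihilator_eigenvector:
  fixes A :: "'k::finite \<Rightarrow> 'k \<Rightarrow> complex"
  assumes y0: "y \<noteq> (\<lambda>_. 0)" and sum_y: "(\<Sum>k\<in>UNIV. y k) = 0"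
    and sum_A: "\<And>w. (\<Sum>k\<in>UNIV. mat_apply A w k) = 0"
    and quad: "mat_apply A (mat_apply A y) = (\<lambda>k. \<beta> * mat_apply A y k + \<gamma> * y k)"
  shows "\<exists>r w. r\<^sup>2 = \<beta> * r + \<gamma> \<and> w \<noteq> (\<lambda>_. 0) \<and> (\<Sum>k\<in>UNIV. w k) = 0
    \<and> mat_apply A w = (\<lambda>k. r * w k)"
proof -
  obtain r1 r2 where \<beta>: "\<beta> = r1 + r2" and \<gamma>: "\<gamma> = - (r1 * r2)"
  proof
    define q where "q = csqrt (\<beta>\<^sup>2 + 4 * \<gamma>)"
    show "\<beta> = (\<beta> + q) / 2 + (\<beta> - q) / 2" by (simp add: field_simps)
    have "q * q = \<beta>\<^sup>2 + 4 * \<gamma>" unfolding q_def by (simp flip: power2_eq_square)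
    then show "\<gamma> = - ((\<beta> + q) / 2 * ((\<beta> - q) / 2))"
      by (simp add: field_simps power2_eq_square)
  qed
  have r1: "r1\<^sup>2 = \<beta> * r1 + \<gamma>" and r2: "r2\<^sup>2 = \<beta> * r2 + \<gamma>"
    unfolding \<beta> \<gamma> by (simp_all add: power2_eq_square algebra_simps)
  define w where "w k = mat_apply A y k - r2 * y k" for k
  have Aw: "mat_apply A w = (\<lambda>k. r1 * w k)"
    unfolding w_def mat_apply_diff mat_apply_scale quad \<beta> \<gamma>
    by (simp add: fun_eq_iff algebra_simps)
  show ?thesis
  proof (cases "w = (\<lambda>_. 0)")
    case True
    then have "mat_apply A y = (\<lambda>k. r2 * y k)" by (simp add: w_def fun_eq_iff)
    then show ?thesis using r2 y0 sum_y by blast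
  next
    case False
    moreover have "(\<Sum>k\<in>UNIV. w k) = 0"
      using sum_A[of y] sum_y by (simp add: w_def sum_subtractf flip: sum_distrib_left)
    ultimately show ?thesis using r1 Aw by blast
  qed
qed

lemma quadratic_roots_in_unit_disc:
  fixes \<mu> :: complex and T D :: real
  assumes eq: "\<mu>\<^sup>2 - of_real T * \<mu> + of_real D = 0"
    and "D < 1" and "-1 < D" and "T < 1 + D" and "-T < 1 + D"
  shows "cmod \<mu> < 1"
proof -
  obtain a b where ab: "\<mu> = Complex a b" by (cases \<mu>)
  have re: "a\<^sup>2 - b\<^sup>2 - T * a + D = 0"
    using arg_cong[OF eq, of Re] unfolding ab by (simp add: power2_eq_square)
  have im: "(2 * a - T) * b = 0"
    using arg_cong[OF eq, of Im] unfolding ab by (simp add: power2_eq_square algebra_simps)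
  show ?thesis
  proof (cases "b = 0")
    case False
    then have "T = 2 * a" using im by simp
    then have "a\<^sup>2 + b\<^sup>2 = D"
      using re by (simp add: power2_eq_square algebra_simps)
    then have "(cmod \<mu>)\<^sup>2 < 1" unfolding ab cmod_power2 using assms by simp
    then show ?thesis by (smt (verit) norm_ge_zero one_power2 power2_less_imp_less)
  next
    case True
    then have re': "a\<^sup>2 - T * a + D = 0" using re by simp
    \<comment> \<open>the real quadratic is positive at \<open>\<plusminus>1\<close> and increasing beyond them\<close>
    have "a\<^sup>2 - T * a + D = (1 - T + D) + (a - 1) * (a + 1 - T)"
      and "a\<^sup>2 - T * a + D = (1 + T + D) + (a + 1) * (a - 1 - T)"
      by (simp_all add: power2_eq_square algebra_simps)
    then have "\<bar>a\<bar> < 1"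
      using re' assms mult_nonneg_nonneg[of "a - 1" "a + 1 - T"] mult_nonpos_nonpos[of "a + 1" "a - 1 - T"]
      by (cases "a \<ge> 1"; cases "a \<le> -1") linarith+
    then show ?thesis unfolding ab True by (simp add: cmod_def)
  qed
qed

section \<open>The graph Laplacian\<close>

definition edge_weight :: "('n::finite \<Rightarrow> 'n \<Rightarrow> bool) \<Rightarrow> real" where
  "edge_weight E = 1 / (2 * real (Defs.degree E) * real CARD('n))"

lemma Amat_nth: "Amat E $ i $ j = (if E j i then edge_weight E else 0)"
  by (simp add: Amat_def edge_weight_def)

definition laplacian :: "('n::finite \<Rightarrow> 'n \<Rightarrow> bool) \<Rightarrow> 'n \<Rightarrow> 'n \<Rightarrow> 'a::real_algebra_1" where
  "laplacian E i j = of_real (Lmat E $ i $ j)"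

lemma mat_apply_laplacian:
  fixes w :: "'n::finite \<Rightarrow> 'a::{comm_ring_1, real_algebra_1}"
  shows "mat_apply (laplacian E) w i = of_real (edge_weight E) * (\<Sum>j\<in>UNIV. if E j i then w i - w j else 0)"
proof -
  have "mat_apply (laplacian E) w i
      = (\<Sum>j\<in>UNIV. of_real (if i = j then \<Sum>k\<in>UNIV. Amat E $ i $ k else 0) * w j)
        - (\<Sum>j\<in>UNIV. of_real (Amat E $ i $ j) * w j)"
    by (simp add: mat_apply_def laplacian_def Lmat_def Dmat_def left_diff_distrib sum_subtractf)
  also have "(\<Sum>j\<in>UNIV. of_real (if i = j then \<Sum>k\<in>UNIV. Amat E $ i $ k else 0) * w j)
      = (\<Sum>j\<in>UNIV. of_real (Amat E $ i $ j) * w i)"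
    using mat_apply_of_real_diag[of "\<Sum>k\<in>UNIV. Amat E $ i $ k" w]
    by (simp add: mat_apply_def sum_distrib_right fun_eq_iff)
  also have "\<dots> - (\<Sum>j\<in>UNIV. of_real (Amat E $ i $ j) * w j) = (\<Sum>j\<in>UNIV. of_real (Amat E $ i $ j) * (w i - w j))"
    by (simp add: right_diff_distrib sum_subtractf)
  also have "\<dots> = of_real (edge_weight E) * (\<Sum>j\<in>UNIV. if E j i then w i - w j else 0)"
    unfolding sum_distrib_left by (intro sum.cong) (auto simp: Amat_nth)
  finally show ?thesis .
qed

lemma laplacian_row_sum: "(\<Sum>j\<in>UNIV. Lmat E $ i $ j) = 0"
  using mat_apply_laplacian[of E "\<lambda>_. 1 :: real" i] by (simp add: mat_apply_def laplacian_def)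

lemma laplacian_symmetric:
  assumes "symmetric_graph E"
  shows "Lmat E $ i $ j = Lmat E $ j $ i"
  using assms by (auto simp: symmetric_graph_def Lmat_def Dmat_def Amat_nth)

lemma sum_mat_apply_laplacian:
  fixes w :: "'n::finite \<Rightarrow> 'a::{comm_ring_1, real_algebra_1}"
  assumes "symmetric_graph E"
  shows "(\<Sum>i\<in>UNIV. mat_apply (laplacian E) w i) = 0"
  using laplacian_row_sum[of E] laplacian_symmetric[OF assms]
  by (simp add: sum_mat_apply laplacian_def flip: of_real_sum)

lemma mat_apply_laplacian_const: "mat_apply (laplacian E) (\<lambda>_. c) = (\<lambda>_. 0)"
  by (simp add: fun_eq_iff mat_apply_laplacian)

lemma Smat_nth:
  assumes "symmetric_graph E"
  shows "Smat E $ i $ j = (if i = j then 1 else 0) - 2 * Lmat E $ i $ j"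
proof -
  have bw_sum: "(\<Sum>h\<in>UNIV. bw E i h) = 2 * (\<Sum>h\<in>UNIV. Amat E $ i $ h)"
    using assms unfolding symmetric_graph_def sum_distrib_left
    by (intro sum.cong) (auto simp: Amat_nth bw_def edge_weight_def)
  have "Smat E $ i $ j = (if i = j then 1 - (\<Sum>h\<in>UNIV. bw E i h) else 0) + bw E j i"
    by (simp add: Smat_def Dtmat_def Bmat_def Finite_Cartesian_Product.transpose_def
        Finite_Cartesian_Product.mat_def)
  also have "\<dots> = (if i = j then 1 else 0) - 2 * Lmat E $ i $ j"
    unfolding bw_sum by (simp add: Lmat_def Dmat_def Amat_nth bw_def edge_weight_def)
  finally show ?thesis .
qed

lemma card_in_neighbours_le_degree: "card {j. E j i} \<le> Defs.degree E"
  unfolding Defs.degree_def by (rule Max_ge) auto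

lemma degree_pos:
  assumes "CARD('n::finite) > 1" and "strongly_connected (E :: 'n \<Rightarrow> 'n \<Rightarrow> bool)"
  shows "Defs.degree E > 0"
proof -
  obtain a b :: 'n where "a \<noteq> b"
    using assms(1) card_le_Suc0_iff_eq[of "UNIV :: 'n set"] by force
  have "E\<^sup>*\<^sup>* a b" using assms(2) unfolding strongly_connected_def by auto
  then obtain k where "E a k" using \<open>a \<noteq> b\<close> by (cases rule: converse_rtranclpE) auto
  then have "card {j. E j k} > 0" by (auto simp: card_gt_0_iff)
  then show ?thesis using card_in_neighbours_le_degree[of E k] by linarith
qed

definition edge_energy :: "('n::finite \<Rightarrow> 'n \<Rightarrow> bool) \<Rightarrow> ('n \<Rightarrow> complex) \<Rightarrow> real" where
  "edge_energy E w = (\<Sum>i\<in>UNIV. \<Sum>j\<in>UNIV. if E j i then (cmod (w i - w j))\<^sup>2 else 0)"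

lemma laplacian_quadratic_form:
  assumes "symmetric_graph E"
  shows "(\<Sum>i\<in>UNIV. cnj (w i) * mat_apply (laplacian E) w i) = of_real (edge_weight E * edge_energy E w / 2)"
proof -
  define F where "F i j = (if E j i then cnj (w i) * (w i - w j) else 0)" for i j
  have "(\<Sum>i\<in>UNIV. \<Sum>j\<in>UNIV. F j i) = (\<Sum>i\<in>UNIV. \<Sum>j\<in>UNIV. F i j)"
    by (rule sum.swap)
  then have "2 * (\<Sum>i\<in>UNIV. \<Sum>j\<in>UNIV. F i j) = (\<Sum>i\<in>UNIV. \<Sum>j\<in>UNIV. F i j + F j i)"
    by (simp add: sum.distrib)
  also have "\<dots> = of_real (edge_energy E w)"
  proof -
    have "F i j + F j i = of_real (if E j i then (cmod (w i - w j))\<^sup>2 else 0)" for i j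
    proof -
      have "cnj (w i) * (w i - w j) + cnj (w j) * (w j - w i) = (w i - w j) * cnj (w i - w j)"
        by (simp add: algebra_simps)
      also have "\<dots> = of_real ((cmod (w i - w j))\<^sup>2)"
        by (rule complex_norm_square[symmetric])
      finally show ?thesis
        using assms unfolding F_def symmetric_graph_def by (auto simp del: of_real_power)
    qed
    then show ?thesis by (simp add: edge_energy_def)
  qed
  finally have "(\<Sum>i\<in>UNIV. \<Sum>j\<in>UNIV. F i j) = of_real (edge_energy E w / 2)"
    by (simp add: mult.commute)
  moreover have "cnj (w i) * mat_apply (laplacian E) w i = of_real (edge_weight E) * (\<Sum>j\<in>UNIV. F i j)" for i
    unfolding mat_apply_laplacian F_def sum_distrib_left by (intro sum.cong) (auto simp: mult_ac)
  then have "(\<Sum>i\<in>UNIV. cnj (w i) * mat_apply (laplacian E) w i) = of_real (edge_weight E) * (\<Sum>i\<in>UNIV. \<Sum>j\<in>UNIV. F i j)"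
    by (simp add: sum_distrib_left)
  ultimately show ?thesis by simp
qed

lemma edge_energy_le:
  assumes "symmetric_graph E"
  shows "edge_energy E w \<le> 4 * real (Defs.degree E) * (\<Sum>i\<in>UNIV. (cmod (w i))\<^sup>2)"
proof -
  define d where "d = real (Defs.degree E)"
  define f where "f i = 2 * (cmod (w i))\<^sup>2" for i
  have neighbour_sum: "(\<Sum>i\<in>UNIV. \<Sum>j\<in>UNIV. if E j i then f i else 0) \<le> d * (\<Sum>i\<in>UNIV. f i)"
  proof -
    have "(\<Sum>i\<in>UNIV. \<Sum>j\<in>UNIV. if E j i then f i else 0) = (\<Sum>i\<in>UNIV. real (card {j. E j i}) * f i)"
      by (simp add: sum.If_cases Int_def)
    also have "\<dots> \<le> (\<Sum>i\<in>UNIV. d * f i)"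
      using card_in_neighbours_le_degree[of E] by (intro sum_mono mult_right_mono) (auto simp: d_def f_def)
    finally show ?thesis by (simp add: sum_distrib_left)
  qed
  have "(cmod (w i - w j))\<^sup>2 \<le> f i + f j" for i j
  proof -
    have "(cmod (w i - w j))\<^sup>2 \<le> (cmod (w i) + cmod (w j))\<^sup>2"
      by (simp add: power_mono norm_triangle_ineq4)
    also have "\<dots> \<le> f i + f j"
      unfolding f_def by (smt (verit) power2_diff power2_sum zero_le_power2)
    finally show ?thesis .
  qed
  then have "(if E j i then (cmod (w i - w j))\<^sup>2 else 0) \<le> (if E j i then f i else 0) + (if E i j then f j else 0)" for i j
    using assms unfolding symmetric_graph_def by auto
  then have "edge_energy E w \<le> (\<Sum>i\<in>UNIV. \<Sum>j\<in>UNIV. if E j i then f i else 0)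
      + (\<Sum>i\<in>UNIV. \<Sum>j\<in>UNIV. if E i j then f j else 0)"
    unfolding edge_energy_def sum.distrib[symmetric] by (intro sum_mono)
  also have "(\<Sum>i\<in>UNIV. \<Sum>j\<in>UNIV. if E i j then f j else 0) = (\<Sum>i\<in>UNIV. \<Sum>j\<in>UNIV. if E j i then f i else 0)"
    by (rule sum.swap)
  finally have "edge_energy E w \<le> 2 * (\<Sum>i\<in>UNIV. \<Sum>j\<in>UNIV. if E j i then f i else 0)"
    by simp
  also have "\<dots> \<le> 2 * (d * (\<Sum>i\<in>UNIV. f i))"
    using neighbour_sum by simp
  also have "\<dots> = 4 * d * (\<Sum>i\<in>UNIV. (cmod (w i))\<^sup>2)"
    by (simp add: f_def sum_distrib_left mult_ac)
  finally show ?thesis by (simp add: d_def)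
qed

lemma edge_energy_pos:
  fixes w :: "'n::finite \<Rightarrow> complex"
  assumes sc: "strongly_connected E" and w0: "w \<noteq> (\<lambda>_. 0)" and sum_w: "(\<Sum>i\<in>UNIV. w i) = 0"
  shows "edge_energy E w > 0"
proof (rule ccontr)
  assume "\<not> edge_energy E w > 0"
  then have "edge_energy E w = 0"
    unfolding edge_energy_def by (smt (verit) sum_nonneg zero_le_power2)
  then have "(if E j i then (cmod (w i - w j))\<^sup>2 else 0) = 0" for i j
    unfolding edge_energy_def by (simp add: sum_nonneg_eq_0_iff sum_nonneg)
  then have edge: "E j i \<Longrightarrow> w j = w i" for i j
    by (metis (full_types) eq_iff_diff_eq_0 norm_eq_zero zero_eq_power2)
  have "E\<^sup>*\<^sup>* a b \<Longrightarrow> w a = w b" for a b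
    by (induction rule: rtranclp_induct) (auto dest: edge)
  then have const: "w i = w j" for i j
    using sc unfolding strongly_connected_def by blast
  have "(\<Sum>i\<in>UNIV. w i) = (\<Sum>i\<in>(UNIV :: 'n set). w j)" for j
    by (rule sum.cong[OF refl]) (rule const)
  then have "of_nat CARD('n) * w j = 0" for j
    using sum_w by simp
  then have "w = (\<lambda>_. 0)" by (simp add: fun_eq_iff)
  with w0 show False ..
qed

lemma laplacian_eigenvalue_bounds:
  fixes w :: "'n::finite \<Rightarrow> complex"
  assumes n: "CARD('n) > 1" and sym: "symmetric_graph E" and sc: "strongly_connected E"
    and w0: "w \<noteq> (\<lambda>_. 0)" and sum_w: "(\<Sum>i\<in>UNIV. w i) = 0"
    and eig: "mat_apply (laplacian E) w = (\<lambda>i. r * w i)"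
  shows "\<exists>\<rho>. r = of_real \<rho> \<and> 0 < \<rho> \<and> \<rho> \<le> 1 / real CARD('n)"
proof -
  define N where "N = (\<Sum>i\<in>UNIV. (cmod (w i))\<^sup>2)"
  obtain i0 where "w i0 \<noteq> 0" using w0 by auto
  then have N: "N > 0" unfolding N_def by (intro sum_pos2[of UNIV i0]) auto
  \<comment> \<open>\<open>r\<close> is the Rayleigh quotient of \<open>w\<close>\<close>
  have "r * of_real N = (\<Sum>i\<in>UNIV. cnj (w i) * mat_apply (laplacian E) w i)"
    by (simp add: eig N_def sum_distrib_left complex_norm_square mult_ac flip: of_real_power)
  also have "\<dots> = of_real (edge_weight E * edge_energy E w / 2)"
    by (rule laplacian_quadratic_form[OF sym])
  finally have r: "r = of_real (edge_weight E * edge_energy E w / (2 * N))"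
    using N by (simp add: field_simps)
  have d: "real (Defs.degree E) > 0" using degree_pos[OF n sc] by simp
  have "edge_weight E * edge_energy E w / (2 * N) \<le> edge_weight E * (4 * real (Defs.degree E) * N) / (2 * N)"
    using edge_energy_le[OF sym, of w] d N
    by (intro divide_right_mono mult_left_mono) (auto simp: N_def edge_weight_def)
  also have "\<dots> = 1 / real CARD('n)"
    using N d by (simp add: edge_weight_def)
  finally show ?thesis
    using r edge_energy_pos[OF sc w0 sum_w] N d by (intro exI[of _ "edge_weight E * edge_energy E w / (2 * N)"])
      (auto simp: edge_weight_def)
qed

section \<open>The iteration matrix\<close>

definition stack :: "(real^'n) \<times> (real^'n) \<Rightarrow> 'n + 'n \<Rightarrow> real" where
  "stack p = case_sum (vec_nth (fst p)) (vec_nth (snd p))"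

lemma tendsto_stackI:
  assumes "\<And>k. (\<lambda>t. stack (f t) k) \<longlonglongrightarrow> stack p k"
  shows "f \<longlonglongrightarrow> p"
proof -
  have "(\<lambda>t. fst (f t)) \<longlonglongrightarrow> fst p" "(\<lambda>t. snd (f t)) \<longlonglongrightarrow> snd p"
    using assms[of "Inl _"] assms[of "Inr _"] by (auto simp: stack_def intro!: vec_tendstoI)
  then show ?thesis using tendsto_Pair by fastforce
qed

definition consensus_mat :: "('n::finite \<Rightarrow> 'n \<Rightarrow> bool) \<Rightarrow> real \<Rightarrow> 'n + 'n \<Rightarrow> 'n + 'n \<Rightarrow> real" where
  "consensus_mat E eps = block_mat
     (\<lambda>i j. (Finite_Cartesian_Product.mat 1 - Lmat E) $ i $ j) (\<lambda>i j. (eps *\<^sub>R Finite_Cartesian_Product.mat 1) $ i $ j)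
     (\<lambda>i j. Lmat E $ i $ j) (\<lambda>i j. (Smat E - eps *\<^sub>R Finite_Cartesian_Product.mat 1) $ i $ j)"

lemma stack_Mstep: "stack (Mstep E eps p) = mat_apply (consensus_mat E eps) (stack p)"
  unfolding consensus_mat_def mat_apply_block_mat stack_def comp_def sum.case mat_apply_vec_nth
  by (simp add: Mstep_def fun_eq_iff split: sum.split)

lemma stack_traj: "stack (traj E eps x0 t) = (mat_apply (consensus_mat E eps) ^^ t) (stack (x0, 0))"
  by (induction t) (simp_all add: traj_def stack_Mstep)

lemma mat_apply_consensus_mat:
  fixes z :: "'n::finite + 'n \<Rightarrow> 'a::{comm_ring_1, real_algebra_1}"
  assumes "symmetric_graph E"
  shows "mat_apply (\<lambda>k l. of_real (consensus_mat E eps k l)) z = case_sum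
    (\<lambda>i. z (Inl i) - mat_apply (laplacian E) (z \<circ> Inl) i + of_real eps * z (Inr i))
    (\<lambda>i. mat_apply (laplacian E) (z \<circ> Inl) i + of_real (1 - eps) * z (Inr i) - 2 * mat_apply (laplacian E) (z \<circ> Inr) i)"
proof -
  have "(\<lambda>k l. of_real (consensus_mat E eps k l) :: 'a) = block_mat
     (\<lambda>i j. of_real (if i = j then 1 else 0) - laplacian E i j) (\<lambda>i j. of_real (if i = j then eps else 0))
     (laplacian E) (\<lambda>i j. of_real (if i = j then 1 - eps else 0) - 2 * laplacian E i j)"
    by (auto simp: fun_eq_iff consensus_mat_def block_mat_def laplacian_def Smat_nth[OF assms]
        Finite_Cartesian_Product.mat_def split: sum.split)
  then show ?thesis
    by (simp add: mat_apply_block_mat mat_apply_mat_diff mat_apply_of_real_diag mat_apply_mat_scale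
        fun_eq_iff split: sum.split)
qed

lemma mat_apply_consensus_mat_real:
  assumes "symmetric_graph E"
  shows "mat_apply (consensus_mat E eps) z = case_sum
    (\<lambda>i. z (Inl i) - mat_apply (laplacian E) (z \<circ> Inl) i + eps * z (Inr i))
    (\<lambda>i. mat_apply (laplacian E) (z \<circ> Inl) i + (1 - eps) * z (Inr i) - 2 * mat_apply (laplacian E) (z \<circ> Inr) i)"
  using mat_apply_consensus_mat[OF assms, of eps z] by simp

lemma consensus_mat_column_sums_one:
  assumes "symmetric_graph E"
  shows "column_sums_one (consensus_mat E eps)"
proof (rule column_sums_oneI)
  fix z :: "'a + 'a \<Rightarrow> real"
  show "(\<Sum>k\<in>UNIV. mat_apply (consensus_mat E eps) z k) = (\<Sum>k\<in>UNIV. z k)"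
    unfolding sum_UNIV_Plus mat_apply_consensus_mat_real[OF assms]
    by (simp add: sum.distrib sum_subtractf sum_mat_apply_laplacian[OF assms] algebra_simps
        flip: sum_distrib_left)
qed

lemma consensus_mat_fixed_point:
  assumes "symmetric_graph E"
  shows "mat_apply (consensus_mat E eps) (case_sum (\<lambda>_. c) (\<lambda>_. 0)) = case_sum (\<lambda>_. c) (\<lambda>_. 0)"
  by (simp add: mat_apply_consensus_mat_real[OF assms] comp_def mat_apply_laplacian_const fun_eq_iff
      split: sum.split)

lemma consensus_quadratic:
  fixes y s :: "'n::finite \<Rightarrow> complex"
  assumes eqL: "\<And>i. y i - mat_apply (laplacian E) y i + of_real eps * s i = \<mu> * y i"
    and eqR: "\<And>i. mat_apply (laplacian E) y i + of_real (1 - eps) * s i - 2 * mat_apply (laplacian E) s i = \<mu> * s i"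
  shows "mat_apply (laplacian E) (mat_apply (laplacian E) y)
    = (\<lambda>i. (3 - 3 * \<mu>) / 2 * mat_apply (laplacian E) y i + (1 - of_real eps - \<mu>) * (\<mu> - 1) / 2 * y i)"
proof
  fix i
  let ?L = "mat_apply (laplacian E)"
  have elimination: "b = (3 - 3 * \<mu>) / 2 * a + (1 - e - \<mu>) * (\<mu> - 1) / 2 * Y"
    if "e * S = (\<mu> - 1) * Y + a" "e * c = (\<mu> - 1) * a + b" "e * (a + (1 - e) * S - 2 * c) = e * (\<mu> * S)"
    for a b c Y S e :: complex
  proof -
    have "2 * b = 2 * (e * c) - 2 * ((\<mu> - 1) * a)" using that(2) by simp
    also have "2 * (e * c) = e * a + (1 - e - \<mu>) * (e * S)"
      using that(3) by (simp add: algebra_simps)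
    finally have "2 * b = (3 - 3 * \<mu>) * a + (1 - e - \<mu>) * (\<mu> - 1) * Y"
      unfolding that(1) by (simp add: algebra_simps)
    then have "b = ((3 - 3 * \<mu>) * a + (1 - e - \<mu>) * (\<mu> - 1) * Y) / 2"
      by (simp add: eq_divide_eq mult.commute)
    then show ?thesis by (simp add: add_divide_distrib)
  qed
  have eps_s: "(\<lambda>i. of_real eps * s i) = (\<lambda>i. (\<mu> - 1) * y i + ?L y i)"
    using eqL by (auto simp: fun_eq_iff algebra_simps)
  have "of_real eps * ?L s i = (\<mu> - 1) * ?L y i + ?L (?L y) i"
    using fun_cong[OF arg_cong[OF eps_s, of ?L], of i] by (simp add: mat_apply_scale mat_apply_add)
  \<comment> \<open>multiplied by \<open>eps\<close>, the second block row only involves \<open>eps * s\<close> and \<open>eps * L s\<close>, eliminated above\<close>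
  moreover have "of_real eps * (?L y i + (1 - of_real eps) * s i - 2 * ?L s i) = of_real eps * (\<mu> * s i)"
    using eqR[of i] by simp
  ultimately show "?L (?L y) i = (3 - 3 * \<mu>) / 2 * ?L y i + (1 - of_real eps - \<mu>) * (\<mu> - 1) / 2 * y i"
    using fun_cong[OF eps_s, of i] by (intro elimination)
qed

lemma consensus_root_norm_lt_1:
  fixes \<mu> :: complex
  assumes \<rho>: "0 < \<rho>" "\<rho> \<le> q" and q: "q \<le> 1 / 2" and eps: "0 < eps" "eps < (1 - q) * (2 - q)"
    and eq: "\<mu>\<^sup>2 - of_real (2 - 3 * \<rho> - eps) * \<mu> + of_real (1 - 3 * \<rho> + 2 * \<rho>\<^sup>2 - eps) = 0"
  shows "cmod \<mu> < 1"
proof (rule quadratic_roots_in_unit_disc[OF eq])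
  have "(1 - \<rho>) * (2 - \<rho>) - (1 - q) * (2 - q) = (q - \<rho>) * (3 - q - \<rho>)"
    by (simp add: algebra_simps)
  moreover have "(q - \<rho>) * (3 - q - \<rho>) \<ge> 0"
    using \<rho> q by (intro mult_nonneg_nonneg) auto
  ultimately have eps_\<rho>: "eps < (1 - \<rho>) * (2 - \<rho>)" using eps by linarith
  have expand: "(1 - \<rho>) * (2 - \<rho>) = 2 - 3 * \<rho> + \<rho>\<^sup>2"
    by (simp add: power2_eq_square algebra_simps)
  have "\<rho>\<^sup>2 \<le> \<rho> / 2" using \<rho> q by (simp add: power2_eq_square)
  then show "1 - 3 * \<rho> + 2 * \<rho>\<^sup>2 - eps < 1" using \<rho> eps by linarith
  have "0 < \<rho>\<^sup>2" using \<rho> by simp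
  then show "-1 < 1 - 3 * \<rho> + 2 * \<rho>\<^sup>2 - eps" using eps_\<rho> expand by linarith
  show "2 - 3 * \<rho> - eps < 1 + (1 - 3 * \<rho> + 2 * \<rho>\<^sup>2 - eps)" using \<open>0 < \<rho>\<^sup>2\<close> by linarith
  show "- (2 - 3 * \<rho> - eps) < 1 + (1 - 3 * \<rho> + 2 * \<rho>\<^sup>2 - eps)" using eps_\<rho> expand by linarith
qed

lemma consensus_eigenvalue_lt_1_of_zero_sum:
  fixes y s :: "'n::finite \<Rightarrow> complex"
  assumes n: "CARD('n) > 1" and sym: "symmetric_graph E" and sc: "strongly_connected E"
    and eps: "0 < eps" "eps < (1 - 1 / real CARD('n)) * (2 - 1 / real CARD('n))"
    and y0: "y \<noteq> (\<lambda>_. 0)" and sum_y: "(\<Sum>i\<in>UNIV. y i) = 0"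
    and eqL: "\<And>i. y i - mat_apply (laplacian E) y i + of_real eps * s i = \<mu> * y i"
    and eqR: "\<And>i. mat_apply (laplacian E) y i + of_real (1 - eps) * s i - 2 * mat_apply (laplacian E) s i = \<mu> * s i"
  shows "cmod \<mu> < 1"
proof -
  obtain r w where r: "r\<^sup>2 = (3 - 3 * \<mu>) / 2 * r + (1 - of_real eps - \<mu>) * (\<mu> - 1) / 2"
    and w: "w \<noteq> (\<lambda>_. 0)" "(\<Sum>i\<in>UNIV. w i) = 0" "mat_apply (laplacian E) w = (\<lambda>i. r * w i)"
    using quadratic_annihilator_eigenvector[OF y0 sum_y sum_mat_apply_laplacian[OF sym]
        consensus_quadratic[OF eqL eqR]] by blast
  obtain \<rho> where \<rho>: "r = of_real \<rho>" "0 < \<rho>" "\<rho> \<le> 1 / real CARD('n)"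
    using laplacian_eigenvalue_bounds[OF n sym sc w] by blast
  have "\<mu>\<^sup>2 - of_real (2 - 3 * \<rho> - eps) * \<mu> + of_real (1 - 3 * \<rho> + 2 * \<rho>\<^sup>2 - eps)
      = 2 * (r\<^sup>2 - ((3 - 3 * \<mu>) / 2 * r + (1 - of_real eps - \<mu>) * (\<mu> - 1) / 2))"
    unfolding \<rho>(1) by (simp add: field_simps power2_eq_square)
  then have "\<mu>\<^sup>2 - of_real (2 - 3 * \<rho> - eps) * \<mu> + of_real (1 - 3 * \<rho> + 2 * \<rho>\<^sup>2 - eps) = 0"
    using r by simp
  moreover have "1 / real CARD('n) \<le> 1 / 2" using n by simp
  ultimately show ?thesis using consensus_root_norm_lt_1 \<rho>(2,3) eps by blast
qed

lemma norm_one_minus_eps_lt_1: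
  assumes "0 < eps" "eps < (1 - q) * (2 - q)" "0 < q" "q \<le> 1"
  shows "cmod (of_real (1 - eps) :: complex) < 1"
proof -
  have "(1 - q) * (2 - q) = 2 - q * (3 - q)" by (simp add: algebra_simps)
  moreover have "0 \<le> q * (3 - q)" using assms(3,4) by simp
  ultimately show ?thesis unfolding norm_of_real using assms(1,2) by (simp add: abs_less_iff)
qed

lemma consensus_mat_eigenvalue_lt_1:
  fixes z :: "'n::finite + 'n \<Rightarrow> complex"
  assumes n: "CARD('n) > 1" and sym: "symmetric_graph E" and sc: "strongly_connected E"
    and eps: "0 < eps" "eps < (1 - 1 / real CARD('n)) * (2 - 1 / real CARD('n))"
    and z0: "z \<noteq> (\<lambda>_. 0)" and sum_z: "(\<Sum>k\<in>UNIV. z k) = 0"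
    and eig: "mat_apply (\<lambda>k l. of_real (consensus_mat E eps k l)) z = (\<lambda>k. \<mu> * z k)"
  shows "cmod \<mu> < 1"
proof -
  define y s where "y = z \<circ> Inl" and "s = z \<circ> Inr"
  have eqL: "y i - mat_apply (laplacian E) y i + of_real eps * s i = \<mu> * y i" for i
    using fun_cong[OF eig, of "Inl i"] by (simp add: mat_apply_consensus_mat[OF sym] y_def s_def)
  have eqR: "mat_apply (laplacian E) y i + of_real (1 - eps) * s i - 2 * mat_apply (laplacian E) s i = \<mu> * s i" for i
    using fun_cong[OF eig, of "Inr i"] by (simp add: mat_apply_consensus_mat[OF sym] y_def s_def)
  have "(\<Sum>i\<in>UNIV. mat_apply (laplacian E) y i + of_real (1 - eps) * s i - 2 * mat_apply (laplacian E) s i) = (\<Sum>i\<in>UNIV. \<mu> * s i)"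
    using eqR by simp
  then have sum_s: "(1 - of_real eps) * (\<Sum>i\<in>UNIV. s i) = \<mu> * (\<Sum>i\<in>UNIV. s i)"
    by (simp add: sum.distrib sum_subtractf sum_mat_apply_laplacian[OF sym] flip: sum_distrib_left)
  have sum_ys: "(\<Sum>i\<in>UNIV. y i) + (\<Sum>i\<in>UNIV. s i) = 0"
    using sum_z unfolding sum_UNIV_Plus y_def s_def by simp
  show ?thesis
  proof (cases "(\<Sum>i\<in>UNIV. s i) = 0")
    case False
    then have "\<mu> = of_real (1 - eps)" using sum_s by simp
    moreover have "cmod (of_real (1 - eps) :: complex) < 1"
      using norm_one_minus_eps_lt_1[OF eps] n by simp
    ultimately show ?thesis by simp
  next
    case True
    have "y \<noteq> (\<lambda>_. 0)"
    proof
      assume y: "y = (\<lambda>_. 0)"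
      then have s: "s = (\<lambda>_. 0)" using eqL eps by (simp add: mat_apply_def fun_eq_iff)
      have "z k = 0" for k
        using fun_cong[OF y] fun_cong[OF s] by (cases k) (simp_all add: y_def s_def)
      with z0 show False by auto
    qed
    moreover have "(\<Sum>i\<in>UNIV. y i) = 0" using sum_ys True by simp
    ultimately show ?thesis
      using consensus_eigenvalue_lt_1_of_zero_sum[OF n sym sc eps _ _ eqL eqR] by blast
  qed
qed

theorem proposition4:
  fixes E :: "'n::finite \<Rightarrow> 'n \<Rightarrow> bool" and eps :: real
  assumes "CARD('n) > 1"
    and "no_selfloops E"
    and "symmetric_graph E"
    and "strongly_connected E"
    and "0 < eps"
    and "eps < (1 - 1 / real CARD('n)) * (2 - 1 / real CARD('n))"
  shows "average_consensus E eps"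
  unfolding average_consensus_def
proof
  fix x0 :: "real^'n"
  define v :: "'n + 'n \<Rightarrow> real" where "v = case_sum (\<lambda>_. 1 / real CARD('n)) (\<lambda>_. 0)"
  have col: "column_sums_one (consensus_mat E eps)"
    by (rule consensus_mat_column_sums_one[OF assms(3)])
  have fixed: "mat_apply (consensus_mat E eps) v = v"
    unfolding v_def by (rule consensus_mat_fixed_point[OF assms(3)])
  have sum_v: "(\<Sum>k\<in>UNIV. v k) = 1"
    using assms(1) by (simp add: v_def sum_UNIV_Plus)
  have "(\<lambda>t. stack (traj E eps x0 t) k) \<longlonglongrightarrow> (\<Sum>l\<in>UNIV. stack (x0, 0) l) * v k" for k
    unfolding stack_traj
    by (rule mat_apply_power_tendsto_consensus[OF col fixed sum_v consensus_mat_eigenvalue_lt_1[OF assms(1,3-6)]])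
  moreover have "(\<Sum>l\<in>UNIV. stack (x0, 0) l) * v k
      = stack (((\<Sum>i\<in>UNIV. x0 $ i) / real CARD('n)) *\<^sub>R Finite_Cartesian_Product.vec 1, 0) k" for k
    by (simp add: sum_UNIV_Plus stack_def v_def split: sum.split)
  ultimately show "traj E eps x0 \<longlonglongrightarrow>
      (((\<Sum>i\<in>UNIV. x0 $ i) / real CARD('n)) *\<^sub>R Finite_Cartesian_Product.vec 1, 0)"
    by (intro tendsto_stackI) simp
qed

end
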